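(* Let $3 \leq s \leq t$ be integers. Let $G$ be a graph and $V(G) = A \cup B$ a partition of its vertex set. If $G[A]$ is $K_{2,2}$-free, $G[B]$ is $K_{2,2}$-free, and $G(A,B)$ is $K_{s,t}$-free, then $G$ is $K_{s+1,t+1}$-free.
   Context: $G[A]$ is the subgraph induced by $A$; $G(A,B)$ is the spanning subgraph of $G$ whose edges are those of $G$ with one endpoint in $A$ and the other in $B$. A graph is $F$-free if it has no subgraph isomorphic to $F$. *)

theory Defs
  imports Main
begin

definition simple_graph :: "'a set \<Rightarrow> ('a \<Rightarrow> 'a \<Rightarrow> bool) \<Rightarrow> bool" where
  "simple_graph V E \<longleftrightarrow> finite V \<and> (\<forall>x y. E x y \<longrightarrow> E y x) \<and>
     (\<forall>x. \<not> E x x) \<and> (\<forall>x y. E x y \<longrightarrow> x \<in> V \<and> y \<in> V)"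

definition has_Kst :: "'a set \<Rightarrow> ('a \<Rightarrow> 'a \<Rightarrow> bool) \<Rightarrow> nat \<Rightarrow> nat \<Rightarrow> bool" where
  "has_Kst V E s t \<longleftrightarrow> (\<exists>S T. S \<subseteq> V \<and> T \<subseteq> V \<and> S \<inter> T = {} \<and>
     finite S \<and> finite T \<and> card S = s \<and> card T = t \<and> (\<forall>x\<in>S. \<forall>y\<in>T. E x y))"

definition Kst_free :: "'a set \<Rightarrow> ('a \<Rightarrow> 'a \<Rightarrow> bool) \<Rightarrow> nat \<Rightarrow> nat \<Rightarrow> bool" where
  "Kst_free V E s t \<longleftrightarrow> \<not> has_Kst V E s t"

definition induced_edges :: "('a \<Rightarrow> 'a \<Rightarrow> bool) \<Rightarrow> 'a set \<Rightarrow> 'a \<Rightarrow> 'a \<Rightarrow> bool" where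
  "induced_edges E A = (\<lambda>x y. E x y \<and> x \<in> A \<and> y \<in> A)"

text \<open>Edges of G(A,B): those with one endpoint in A and the other in B
  (spanning subgraph, vertex set V(G)).\<close>
definition cross_edges :: "('a \<Rightarrow> 'a \<Rightarrow> bool) \<Rightarrow> 'a set \<Rightarrow> 'a set \<Rightarrow> 'a \<Rightarrow> 'a \<Rightarrow> bool" where
  "cross_edges E A B = (\<lambda>x y. E x y \<and> ((x \<in> A \<and> y \<in> B) \<or> (x \<in> B \<and> y \<in> A)))"

end

theory Submission
  imports Defs
begin

text \<open>Let S, T span a K_{s+1,t+1} in G. Two vertices on each side lying in A would
  form a K_{2,2} in G[A], so S or T meets A in at most one vertex, and likewise for B.
  Since |S|, |T| \<ge> 4, no side meets both A and B in at most one vertex; hence one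
  side lies in A and the other in B up to a single vertex each, and removing those
  vertices leaves a K_{s,t} in G(A,B).\<close>

lemma cross_edges_commute: "cross_edges E A B = cross_edges E B A"
  unfolding cross_edges_def by auto

lemma has_KstI:
  assumes "S \<subseteq> V" "T \<subseteq> V" "S \<inter> T = {}" "card S = s" "card T = t"
    and "finite S" "finite T" "\<forall>x\<in>S. \<forall>y\<in>T. E x y"
  shows "has_Kst V E s t"
  unfolding has_Kst_def using assms by blast

lemma card_le_Suc_card_Int_if_card_Int_le_one:
  assumes "finite S" "S \<subseteq> A \<union> B" "card (S \<inter> A) \<le> 1"
  shows "card S \<le> Suc (card (S \<inter> B))"
proof -
  have "S = (S \<inter> A) \<union> (S \<inter> B)" using assms(2) by blast
  then have "card S \<le> card (S \<inter> A) + card (S \<inter> B)" by (metis card_Un_le)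
  with assms(3) show ?thesis by simp
qed

lemma K22_free_complete_pair_meets_small:
  assumes "Kst_free A (induced_edges E A) 2 2"
    and "S \<inter> T = {}" and complete: "\<forall>x\<in>S. \<forall>y\<in>T. E x y"
  shows "card (S \<inter> A) \<le> 1 \<or> card (T \<inter> A) \<le> 1"
proof (rule ccontr)
  assume "\<not> ?thesis"
  then have "2 \<le> card (S \<inter> A)" "2 \<le> card (T \<inter> A)" by auto
  then obtain X Y where X: "X \<subseteq> S \<inter> A" "card X = 2" and Y: "Y \<subseteq> T \<inter> A" "card Y = 2"
    by (meson obtain_subset_with_card_n)
  have "has_Kst A (induced_edges E A) 2 2"
  proof (rule has_KstI[OF _ _ _ X(2) Y(2)])
    show "finite X" "finite Y" using X(2) Y(2) card.infinite by fastforce+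
    show "\<forall>x\<in>X. \<forall>y\<in>Y. induced_edges E A x y"
      using X(1) Y(1) complete unfolding induced_edges_def by blast
  qed (use X(1) Y(1) assms(2) in auto)
  with assms(1) show False unfolding Kst_free_def by blast
qed

lemma has_Kst_cross_edges_if_sides_nearly_split:
  assumes "S \<union> T \<subseteq> A \<union> B" "S \<inter> T = {}" "finite S" "finite T"
    and "card S = Suc s" "card T = Suc t"
    and "card (S \<inter> A) \<le> 1" "card (T \<inter> B) \<le> 1"
    and complete: "\<forall>x\<in>S. \<forall>y\<in>T. E x y"
  shows "has_Kst (A \<union> B) (cross_edges E A B) s t"
proof -
  have "s \<le> card (S \<inter> B)"
    using card_le_Suc_card_Int_if_card_Int_le_one[of S A B] assms by auto
  then obtain S' where S': "S' \<subseteq> S \<inter> B" "card S' = s"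
    by (meson obtain_subset_with_card_n)
  have "T \<subseteq> B \<union> A" using assms(1) by blast
  then have "t \<le> card (T \<inter> A)"
    using card_le_Suc_card_Int_if_card_Int_le_one[of T B A] assms by auto
  then obtain T' where T': "T' \<subseteq> T \<inter> A" "card T' = t"
    by (meson obtain_subset_with_card_n)
  show ?thesis
  proof (rule has_KstI[OF _ _ _ S'(2) T'(2)])
    show "finite S'" "finite T'"
      using S'(1) T'(1) assms(3,4) finite_subset by blast+
    show "\<forall>x\<in>S'. \<forall>y\<in>T'. cross_edges E A B x y"
      using S'(1) T'(1) complete unfolding cross_edges_def by blast
  qed (use S'(1) T'(1) assms(2) in auto)
qed

theorem lemma4p4:
  fixes V :: "'a set" and E :: "'a \<Rightarrow> 'a \<Rightarrow> bool" and A B :: "'a set"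
    and s t :: nat
  assumes "3 \<le> s" and "s \<le> t"
    and "simple_graph V E"
    and "A \<union> B = V" and "A \<inter> B = {}"
    and "Kst_free A (induced_edges E A) 2 2"
    and "Kst_free B (induced_edges E B) 2 2"
    and "Kst_free V (cross_edges E A B) s t"
  shows "Kst_free V E (s + 1) (t + 1)"
  unfolding Kst_free_def
proof
  assume "has_Kst V E (s + 1) (t + 1)"
  then obtain S T where ST: "S \<union> T \<subseteq> A \<union> B" "S \<inter> T = {}" "finite S" "finite T"
      "card S = Suc s" "card T = Suc t" and complete: "\<forall>x\<in>S. \<forall>y\<in>T. E x y"
    unfolding has_Kst_def using assms(4) by auto
  have A_small: "card (S \<inter> A) \<le> 1 \<or> card (T \<inter> A) \<le> 1"
    and B_small: "card (S \<inter> B) \<le> 1 \<or> card (T \<inter> B) \<le> 1"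
    using K22_free_complete_pair_meets_small ST(2) complete assms(6,7) by blast+
  have "\<not> (card (S \<inter> A) \<le> 1 \<and> card (S \<inter> B) \<le> 1)"
    using card_le_Suc_card_Int_if_card_Int_le_one[of S A B] ST assms(1) by auto
  moreover have "\<not> (card (T \<inter> A) \<le> 1 \<and> card (T \<inter> B) \<le> 1)"
    using card_le_Suc_card_Int_if_card_Int_le_one[of T A B] ST assms(1,2) by auto
  ultimately consider "card (S \<inter> A) \<le> 1" "card (T \<inter> B) \<le> 1"
    | "card (S \<inter> B) \<le> 1" "card (T \<inter> A) \<le> 1"
    using A_small B_small by blast
  then have "has_Kst (A \<union> B) (cross_edges E A B) s t"
  proof cases
    case 1
    then show ?thesis using has_Kst_cross_edges_if_sides_nearly_split[OF ST] complete by blast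
  next
    case 2
    have "S \<union> T \<subseteq> B \<union> A" using ST(1) by blast
    from has_Kst_cross_edges_if_sides_nearly_split[OF this ST(2-6) 2 complete]
    show ?thesis by (simp add: Un_commute cross_edges_commute)
  qed
  with assms(4,8) show False unfolding Kst_free_def by blast
qed

end
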